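(* Let $R$ be a relation with $n$ tuples, and let $\mathcal{R}$ be the output of the following recursive procedure $\textsc{Partition}(R,\mathcal{S})$ run with $\mathcal{S}=\mathcal{P}(\mathrm{vars}(R))$ ordered by increasing cardinality: if $\mathcal{S}=\emptyset$, return $\{R\}$; otherwise let $U$ be the first set in $\mathcal{S}$, for each $i\in\{1,\dots,\lceil\log n\rceil\}$ let $R^i$ be the set of tuples $t\in R$ such that $\deg_R(U=\pi_U t)\in[2^{i-1},2^i]$, and return $\bigcup_i \textsc{Partition}(R^i,\mathcal{S}\setminus\{U\})$. Then (1) $|\mathcal{R}|\le \log^{|\mathcal{P}(\mathrm{vars}(R))|} n$; (2) every instance $T\in\mathcal{R}$ satisfies a constraint set $\sigma_T$ with $\sigma_T(\emptyset)=n$ and $\sigma_T(\mathrm{vars}(R))=1$.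
   Context: For a relation $R$ and $X,Y\subseteq\mathrm{vars}(R)$ and a tuple $\mathbf{y}$ over $Y$, $\deg_R(X\mid Y=\mathbf{y})=|\pi_X(\sigma_{Y=\mathbf{y}}R)|$ and $\deg_R(X\mid Y)=\max_{\mathbf{y}}\deg_R(X\mid Y=\mathbf{y})$; the shorthand $\deg_R(U=u)$ means $\deg_R(\mathrm{vars}(R)\mid U=u)$, the number of tuples of $R$ with $U$-value $u$. In each recursive call degrees are computed in the current (sub)relation. A constraint set for $R$ is a function $\sigma:\mathcal{P}(\mathrm{vars}(R))\to\mathbb{R}_{\ge0}$, and $R$ satisfies $\sigma$ if $\deg_R(Y\mid X)\le 2\sigma(X)/\sigma(Y)$ for all $X\subseteq Y\subseteq\mathrm{vars}(R)$. Empty parts are discarded. *)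

theory Defs
  imports Complex_Main "HOL-Library.FuncSet"
begin

text \<open>Tuples over the variable set V are functions 'v => 'a that are extensional on V
  (value undefined outside V). A relation is a finite set of such tuples.
  Projection onto X is restrict t X.\<close>

definition deg_at :: "('v \<Rightarrow> 'a) set \<Rightarrow> 'v set \<Rightarrow> 'v set \<Rightarrow> ('v \<Rightarrow> 'a) \<Rightarrow> nat" where
  "deg_at R X Y y = card ((\<lambda>t. restrict t X) ` {t \<in> R. restrict t Y = y})"

definition deg :: "('v \<Rightarrow> 'a) set \<Rightarrow> 'v set \<Rightarrow> 'v set \<Rightarrow> nat" where
  "deg R X Y = Max ({deg_at R X Y (restrict t Y) | t. t \<in> R} \<union> {0})"

definition deg_val :: "'v set \<Rightarrow> ('v \<Rightarrow> 'a) set \<Rightarrow> 'v set \<Rightarrow> ('v \<Rightarrow> 'a) \<Rightarrow> nat" where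
  "deg_val V R U u = deg_at R V U u"

definition part_i :: "'v set \<Rightarrow> ('v \<Rightarrow> 'a) set \<Rightarrow> 'v set \<Rightarrow> nat \<Rightarrow> ('v \<Rightarrow> 'a) set" where
  "part_i V R U i = {t \<in> R. 2 ^ (i - 1) \<le> deg_val V R U (restrict t U) \<and> deg_val V R U (restrict t U) \<le> 2 ^ i}"

text \<open>PARTITION(R, S). The parameter n is the number of tuples of the original relation,
  used for the range i in {1..ceil(log n)}. Empty parts are discarded.\<close>
fun partition_rel :: "'v set \<Rightarrow> nat \<Rightarrow> 'v set list \<Rightarrow> ('v \<Rightarrow> 'a) set \<Rightarrow> ('v \<Rightarrow> 'a) set set" where
  "partition_rel V n [] R = (if R = {} then {} else {R})"
| "partition_rel V n (U # Us) R =
     (\<Union>i \<in> {1..nat \<lceil>log 2 (real n)\<rceil>}. partition_rel V n Us (part_i V R U i))"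

definition constraint_set :: "'v set \<Rightarrow> ('v set \<Rightarrow> real) \<Rightarrow> bool" where
  "constraint_set V \<sigma> \<longleftrightarrow> (\<forall>X. X \<subseteq> V \<longrightarrow> \<sigma> X \<ge> 0)"

text \<open>T satisfies sigma: deg_T(Y | X) <= 2 sigma(X) / sigma(Y) for all X <= Y <= V,
  written multiplicatively (so that sigma(Y) = 0 imposes no constraint, i.e. the bound is +infinity).\<close>
definition satisfies :: "('v \<Rightarrow> 'a) set \<Rightarrow> 'v set \<Rightarrow> ('v set \<Rightarrow> real) \<Rightarrow> bool" where
  "satisfies T V \<sigma> \<longleftrightarrow>
     (\<forall>X Y. X \<subseteq> Y \<and> Y \<subseteq> V \<longrightarrow> real (deg T Y X) * \<sigma> Y \<le> 2 * \<sigma> X)"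

end

theory Submission
  imports Defs
begin

text \<open>
  At the levels U = {} and U = V the degree deg_R(U = pi_U t) does not depend on t, so only the
  k - 2 remaining levels (k = |P(V)|) split a relation, each into at most ceil(log n) parts; and
  since consecutive dyadic bands overlap in one point, every tuple lies in at most 2^(k-2) of
  the final parts, so there are at most n 2^(k-2) of them. No single one of these counts, nor
  the trivial bound 2^n, is below (log n)^k in all cases, but their minimum is.

  A final part T remembers, for every level U, the relation F U that was split there and the
  lower end l U = 2^(i-1) of the band T fell into; take sigma(X) = l X and sigma({}) = n
  (l V = 1, as every tuple has V-degree 1). For X \<subset> Y, every Y-value of T above a fixed
  X-value x has at least l Y extensions in F Y; these lie in F Y \<subseteq> F X (X precedes Y in the
  cardinality order) and all have X-value x, of which F X has at most 2 l X. Hence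
  deg_T(Y | X) l Y \<le> 2 l X.
\<close>

section \<open>Arithmetic\<close>

lemma two_pow_add_two_le_three_pow:
  assumes "8 \<le> k" shows "(2::nat) ^ (k + 2) \<le> 3 ^ k"
  using assms
proof (induction k rule: dec_induct)
  case base then show ?case by simp
next
  case (step k) then show ?case by simp
qed

lemma Suc_power_le_three_mult_power:
  fixes f m :: nat
  assumes "1 \<le> f" "m \<le> f"
  shows "real (f + 1) ^ m \<le> 3 * real f ^ m"
proof -
  have f_pos: "real f > 0" using assms by simp
  have "(1 + 1 / real f) ^ m \<le> exp (1 / real f) ^ m"
    by (rule power_mono) (auto simp: f_pos intro: add_nonneg_nonneg)
  also have "\<dots> = exp (real m / real f)"
    by (simp flip: exp_of_nat_mult)
  also have "\<dots> \<le> exp 1"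
    using assms f_pos by simp
  also have "\<dots> \<le> 3"
    by (rule exp_le)
  finally have growth: "(1 + 1 / real f) ^ m \<le> 3" .
  have "real (f + 1) ^ m = real f ^ m * (1 + 1 / real f) ^ m"
    using f_pos by (simp add: field_simps flip: power_mult_distrib)
  also have "\<dots> \<le> real f ^ m * 3"
    using growth by (rule mult_left_mono) simp
  finally show ?thesis by (simp add: mult.commute)
qed

lemma three_halves_le_log2_3: "3 / 2 \<le> log 2 (3::real)"
proof -
  have square: "(2::real) powr (3 / 2) * 2 powr (3 / 2) = 8"
    by (simp flip: powr_add)
  have "(2::real) powr (3 / 2) \<le> 3"
  proof (rule ccontr)
    assume "\<not> ?thesis"
    then have "(2::real) powr (3 / 2) * 2 powr (3 / 2) > 3 * 3"
      by (intro mult_strict_mono) auto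
    with square show False by simp
  qed
  then show ?thesis by (subst le_log_iff) auto
qed

lemma le_floor_log_power_of_count_bounds:
  fixes N f n k :: nat
  assumes "2 \<le> f" "n < 2 ^ (f + 1)" and k: "k = 2 \<or> k = 4 \<or> 8 \<le> k"
    and by_levels: "N \<le> (f + 1) ^ (k - 2)" and by_tuples: "N \<le> n * 2 ^ (k - 2)"
    and by_subsets: "N \<le> 2 ^ n"
  shows "N \<le> f ^ k"
proof (cases "k - 2 \<le> f")
  case True
  have "real N \<le> real (f + 1) ^ (k - 2)" using by_levels by (metis of_nat_le_iff of_nat_power)
  also have "\<dots> \<le> 3 * real f ^ (k - 2)" using assms True by (intro Suc_power_le_three_mult_power) auto
  also have "\<dots> \<le> real f ^ 2 * real f ^ (k - 2)"
    using power_mono[of 2 "real f" 2] assms by (intro mult_right_mono) auto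
  also have "\<dots> = real f ^ (2 + (k - 2))"
    by (simp only: power_add)
  also have "2 + (k - 2) = k"
    using k by auto
  finally show ?thesis by (metis of_nat_le_iff of_nat_power)
next
  case False
  then have "8 \<le> k" using k assms by auto
  note by_tuples
  also have "n * 2 ^ (k - 2) < 2 ^ (f + 1) * 2 ^ (k - 2)"
    using assms(2) by simp
  also have "\<dots> = 2 ^ (f + 1 + (k - 2))"
    by (simp only: power_add)
  finally have N_less: "N < 2 ^ (f + 1 + (k - 2))" .
  consider "f = 2" | "f = 3" | "4 \<le> f" using assms by linarith
  then show ?thesis
  proof cases
    case 1
    have "(2::nat) ^ n \<le> 2 ^ 7" using assms(2) 1 by (intro power_increasing) auto
    then have "N \<le> 2 ^ 7" using by_subsets by linarith
    also have "(2::nat) ^ 7 \<le> 2 ^ k" using \<open>8 \<le> k\<close> by (intro power_increasing) auto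
    finally show ?thesis using 1 by simp
  next
    case 2
    have "N \<le> 2 ^ (k + 2)" using N_less 2 \<open>8 \<le> k\<close> by simp
    also have "\<dots> \<le> 3 ^ k" using \<open>8 \<le> k\<close> by (rule two_pow_add_two_le_three_pow)
    finally show ?thesis using 2 by simp
  next
    case 3
    have "(2::nat) ^ (f + 1 + (k - 2)) \<le> 2 ^ (2 * k)" using False by (intro power_increasing) auto
    then have "N \<le> 2 ^ (2 * k)" using N_less by linarith
    also have "\<dots> = 4 ^ k" by (simp add: power_mult)
    also have "\<dots> \<le> f ^ k" using 3 by (intro power_mono) auto
    finally show ?thesis .
  qed
qed

lemma le_log_power_of_count_bounds:
  fixes N n k :: nat
  assumes "2 \<le> n" and k: "k = 2 \<or> k = 4 \<or> 8 \<le> k"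
    and by_levels: "N \<le> nat \<lceil>log 2 (real n)\<rceil> ^ (k - 2)"
    and by_tuples: "N \<le> n * 2 ^ (k - 2)" and by_subsets: "N \<le> 2 ^ n"
  shows "real N \<le> log 2 (real n) ^ k"
proof -
  obtain f where f_low: "2 ^ f \<le> n" and f_high: "n < 2 ^ (f + 1)"
    using ex_power_ivl1[of 2 n] assms(1) by auto
  have "f \<noteq> 0" using f_high assms(1) by (cases f) auto
  have f_le_log: "real f \<le> log 2 (real n)"
    using f_low assms(1) by (subst le_log_iff) (auto simp: powr_realpow)
  have "real n < 2 ^ (f + 1)"
    using f_high by (metis of_nat_less_iff of_nat_numeral of_nat_power)
  then have "log 2 (real n) < real f + 1"
    using assms(1) by (subst log_less_iff) (auto simp: powr_add powr_realpow)
  then have "nat \<lceil>log 2 (real n)\<rceil> \<le> f + 1" by linarith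
  then have N_le: "N \<le> (f + 1) ^ (k - 2)"
    using by_levels by (meson le_trans power_mono zero_le)
  consider "2 \<le> f" | "f = 1" using \<open>f \<noteq> 0\<close> by linarith
  then show ?thesis
  proof cases
    case 1
    then have "N \<le> f ^ k"
      using f_high k N_le by_tuples by_subsets by (rule le_floor_log_power_of_count_bounds)
    then have "real N \<le> real f ^ k" by (metis of_nat_le_iff of_nat_power)
    also have "\<dots> \<le> log 2 (real n) ^ k" using f_le_log by (intro power_mono) auto
    finally show ?thesis .
  next
    case 2
    then consider "n = 2" | "n = 3" using f_high assms(1) by force
    then show ?thesis
    proof cases
      case 1
      then show ?thesis using by_levels by simp
    next
      case 2
      have "real N \<le> (3 / 2) ^ k"
        using k
      proof (elim disjE)
        assume "k = 2"
        then have "real N \<le> 1" using N_le \<open>f = 1\<close> by simp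
        also have "(1::real) \<le> (3 / 2) ^ k" by simp
        finally show ?thesis .
      next
        assume "k = 4"
        then have "real N \<le> 4" using N_le \<open>f = 1\<close> by (simp add: power2_eq_square)
        also have "(4::real) \<le> (3 / 2) ^ k" using \<open>k = 4\<close> by (simp add: eval_nat_numeral)
        finally show ?thesis .
      next
        assume "8 \<le> k"
        have "real N \<le> 8" using by_subsets 2 by simp
        also have "(8::real) \<le> (3 / 2) ^ 8" by (simp add: eval_nat_numeral)
        also have "(3 / 2 :: real) ^ 8 \<le> (3 / 2) ^ k" using \<open>8 \<le> k\<close> by (intro power_increasing) auto
        finally show ?thesis .
      qed
      also have "\<dots> \<le> log 2 (real n) ^ k"
        using three_halves_le_log2_3 2 by (intro power_mono) auto
      finally show ?thesis .
    qed
  qed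
qed

lemma two_power_cases:
  assumes "1 \<le> d"
  shows "(2::nat) ^ d = 2 \<or> (2::nat) ^ d = 4 \<or> 8 \<le> (2::nat) ^ d"
proof -
  consider "d = 1" | "d = 2" | "3 \<le> d" using assms by linarith
  then show ?thesis
  proof cases
    case 3
    then have "(2::nat) ^ 3 \<le> 2 ^ d" by (intro power_increasing) auto
    then show ?thesis by simp
  qed simp_all
qed

section \<open>Degrees\<close>

lemma deg_val_eq_card:
  assumes "S \<subseteq> extensional V"
  shows "deg_val V S U u = card {s \<in> S. restrict s U = u}"
proof -
  have "(\<lambda>t. restrict t V) ` {s \<in> S. restrict s U = u} = {s \<in> S. restrict s U = u}"
    using assms by (force simp: extensional_restrict)
  then show ?thesis unfolding deg_val_def deg_at_def by simp
qed

lemma deg_val_all_vars: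
  assumes "S \<subseteq> extensional V" "t \<in> S"
  shows "deg_val V S V (restrict t V) = 1"
proof -
  have "{s \<in> S. restrict s V = restrict t V} = {t}"
    using assms by (auto simp: subset_iff extensional_restrict)
  then show ?thesis using assms(1) by (simp add: deg_val_eq_card)
qed

lemma deg_at_self: "t \<in> T \<Longrightarrow> deg_at T Y Y (restrict t Y) = 1"
proof -
  assume "t \<in> T"
  then have "(\<lambda>s. restrict s Y) ` {s \<in> T. restrict s Y = restrict t Y} = {restrict t Y}"
    by auto
  then show ?thesis unfolding deg_at_def by simp
qed

lemma deg_attained:
  assumes "finite T"
  shows "deg T Y X = 0 \<or> (\<exists>t\<in>T. deg T Y X = deg_at T Y X (restrict t X))"
proof -
  let ?D = "{deg_at T Y X (restrict t X) | t. t \<in> T} \<union> {0}"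
  have "deg T Y X \<in> ?D"
    unfolding deg_def using assms by (intro Max_in) auto
  then show ?thesis by auto
qed

lemma deg_at_mult_le_card:
  assumes "T \<subseteq> F" "F \<subseteq> extensional V" "finite F" "X \<subseteq> Y"
    and "\<forall>s\<in>T. l \<le> deg_val V F Y (restrict s Y)"
  shows "deg_at T Y X x * l \<le> card {u \<in> F. restrict u X = x}"
proof -
  define Ys where "Ys = (\<lambda>s. restrict s Y) ` {s \<in> T. restrict s X = x}"
  define fibre where "fibre y = {u \<in> F. restrict u Y = y}" for y
  have "finite Ys" unfolding Ys_def using assms(1,3) by (simp add: finite_subset)
  have "l \<le> card (fibre y)" if "y \<in> Ys" for y
    using that assms(5) unfolding Ys_def fibre_def by (auto simp flip: deg_val_eq_card[OF assms(2)])
  then have "card Ys * l \<le> (\<Sum>y\<in>Ys. card (fibre y))"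
    using sum_bounded_below[of Ys l "\<lambda>y. card (fibre y)"] by simp
  also have "\<dots> = card (\<Union>y\<in>Ys. fibre y)"
    using \<open>finite Ys\<close> assms(3) by (intro card_UN_disjoint[symmetric]) (auto simp: fibre_def)
  also have "\<dots> \<le> card {u \<in> F. restrict u X = x}"
  proof (rule card_mono)
    have "restrict u X = x" if "restrict u Y = restrict s Y" "restrict s X = x" for u s
      using that assms(4) by (metis inf.absorb_iff2 restrict_restrict)
    then show "(\<Union>y\<in>Ys. fibre y) \<subseteq> {u \<in> F. restrict u X = x}"
      unfolding Ys_def fibre_def by blast
  qed (use assms(3) in simp)
  finally show ?thesis unfolding deg_at_def Ys_def .
qed

lemma vars_nonempty_if_two_le_card:
  assumes "R \<subseteq> extensional V" "2 \<le> card R"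
  shows "V \<noteq> {}"
proof
  assume "V = {}"
  then have "R \<subseteq> {\<lambda>_. undefined}" using assms(1) by simp
  then have "card R \<le> 1" using card_mono[of "{\<lambda>_. undefined}" R] by simp
  with assms(2) show False by simp
qed

section \<open>Number of parts\<close>

lemma card_family_le_card_mult:
  assumes "finite R" "\<And>T. T \<in> P \<Longrightarrow> T \<subseteq> R" "\<And>T. T \<in> P \<Longrightarrow> T \<noteq> {}"
    and "\<And>t. t \<in> R \<Longrightarrow> card {T \<in> P. t \<in> T} \<le> B"
  shows "card P \<le> card R * B"
proof -
  have cover: "P = (\<Union>t\<in>R. {T \<in> P. t \<in> T})"
  proof (intro equalityI subsetI)
    fix T assume "T \<in> P"
    then obtain t where "t \<in> T" using assms(3) by blast
    then show "T \<in> (\<Union>t\<in>R. {T \<in> P. t \<in> T})" using \<open>T \<in> P\<close> assms(2) by blast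
  qed auto
  have "card P = card (\<Union>t\<in>R. {T \<in> P. t \<in> T})"
    using cover by (rule arg_cong)
  also have "\<dots> \<le> (\<Sum>t\<in>R. card {T \<in> P. t \<in> T})"
    using assms(1) by (rule card_UN_le)
  also have "\<dots> \<le> card R * B"
    using sum_bounded_above[of R "\<lambda>t. card {T \<in> P. t \<in> T}" B] assms(4) by simp
  finally show ?thesis .
qed

lemma card_dyadic_bands_le_2:
  fixes J :: "nat set" and d :: nat
  assumes "finite J" "\<And>i. i \<in> J \<Longrightarrow> 2 ^ (i - 1) \<le> d \<and> d \<le> 2 ^ i"
  shows "card J \<le> 2"
proof (cases "J = {}")
  case False
  define m where "m = Min J"
  have "m \<in> J" using False assms(1) by (simp add: m_def)
  have "i \<in> {m, m + 1}" if "i \<in> J" for i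
  proof -
    have "(2::nat) ^ (i - 1) \<le> 2 ^ m" using assms(2) that \<open>m \<in> J\<close> by (meson order.trans)
    moreover have "m \<le> i" using assms(1) that by (simp add: m_def)
    ultimately show ?thesis by auto
  qed
  then have "J \<subseteq> {m, m + 1}" by blast
  then have "card J \<le> card {m, m + 1}" by (intro card_mono) auto
  then show ?thesis by simp
qed simp

lemma part_i_trivial_level:
  assumes "R \<subseteq> extensional V" "U = {} \<or> U = V"
  shows "part_i V R U i = R \<or> part_i V R U i = {}"
proof -
  obtain c where "\<forall>t\<in>R. deg_val V R U (restrict t U) = c"
    using assms(2)
  proof
    assume "U = {}"
    then show thesis using that[of "deg_val V R U (\<lambda>_. undefined)"] by (simp add: restrict_def)
  next
    assume "U = V"
    then show thesis using that[of 1] deg_val_all_vars[OF assms(1)] by simp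
  qed
  then show ?thesis
    unfolding part_i_def by (cases "2 ^ (i - 1) \<le> c \<and> c \<le> 2 ^ i") auto
qed

lemma partition_rel_empty [simp]: "partition_rel V n Ss {} = {}"
  by (induction Ss) (auto simp: part_i_def)

lemma finite_partition_rel: "finite (partition_rel V n Ss R)"
  by (induction Ss arbitrary: R) auto

lemma partition_rel_memberD:
  assumes "T \<in> partition_rel V n Ss R"
  shows "T \<subseteq> R" "T \<noteq> {}"
proof -
  have "T \<subseteq> R \<and> T \<noteq> {}"
    using assms
  proof (induction Ss arbitrary: R)
    case (Cons U Us)
    then obtain i where "T \<in> partition_rel V n Us (part_i V R U i)" by auto
    with Cons.IH show ?case unfolding part_i_def by blast
  qed (auto split: if_splits)
  then show "T \<subseteq> R" "T \<noteq> {}" by auto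
qed

lemma partition_rel_Cons_le_one:
  assumes "n \<le> 1"
  shows "partition_rel V n (U # Us) R = {}"
proof -
  have "log 2 (real n) \<le> 0" using assms by (auto simp: log_def le_Suc_eq)
  then show ?thesis by simp
qed

lemma partition_rel_trivial_level:
  assumes "R \<subseteq> extensional V" "U = {} \<or> U = V"
  shows "partition_rel V n (U # Us) R \<subseteq> partition_rel V n Us R"
proof -
  have "partition_rel V n Us (part_i V R U i) \<subseteq> partition_rel V n Us R" for i
    using part_i_trivial_level[OF assms, of i] by auto
  then show ?thesis by auto
qed

lemma card_partition_rel_le:
  assumes "R \<subseteq> extensional V"
  shows "card (partition_rel V n Ss R)
    \<le> nat \<lceil>log 2 (real n)\<rceil> ^ length (filter (\<lambda>U. U \<noteq> {} \<and> U \<noteq> V) Ss)"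
  using assms
proof (induction Ss arbitrary: R)
  case (Cons U Us)
  define c where "c = nat \<lceil>log 2 (real n)\<rceil>"
  define l where "l = length (filter (\<lambda>U. U \<noteq> {} \<and> U \<noteq> V) Us)"
  show ?case
  proof (cases "U = {} \<or> U = V")
    case True
    have "card (partition_rel V n (U # Us) R) \<le> card (partition_rel V n Us R)"
      using partition_rel_trivial_level[OF Cons.prems True]
      by (simp add: card_mono finite_partition_rel)
    also have "\<dots> \<le> c ^ l" using Cons.IH[OF Cons.prems] unfolding c_def l_def .
    finally show ?thesis using True unfolding c_def l_def by auto
  next
    case False
    have "part_i V R U i \<subseteq> extensional V" for i
      using Cons.prems unfolding part_i_def by blast
    then have IH: "card (partition_rel V n Us (part_i V R U i)) \<le> c ^ l" for i
      using Cons.IH unfolding c_def l_def by blast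
    have "card (partition_rel V n (U # Us) R)
        \<le> (\<Sum>i\<in>{1..c}. card (partition_rel V n Us (part_i V R U i)))"
      unfolding c_def by (simp add: card_UN_le)
    also have "\<dots> \<le> (\<Sum>i\<in>{1..c}. c ^ l)"
      using IH by (rule sum_mono)
    finally show ?thesis using False unfolding c_def l_def by simp
  qed
qed simp

lemma card_partition_rel_containing_le:
  assumes "R \<subseteq> extensional V"
  shows "card {T \<in> partition_rel V n Ss R. t \<in> T}
    \<le> 2 ^ length (filter (\<lambda>U. U \<noteq> {} \<and> U \<noteq> V) Ss)"
  using assms
proof (induction Ss arbitrary: R)
  case Nil
  have "card {T \<in> partition_rel V n [] R. t \<in> T} \<le> card {R}"
    by (intro card_mono) auto
  then show ?case by simp
next
  case (Cons U Us)
  define l where "l = length (filter (\<lambda>U. U \<noteq> {} \<and> U \<noteq> V) Us)"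
  let ?containing = "\<lambda>S. {T \<in> partition_rel V n Us S. t \<in> T}"
  show ?case
  proof (cases "U = {} \<or> U = V")
    case True
    have "card {T \<in> partition_rel V n (U # Us) R. t \<in> T} \<le> card (?containing R)"
      using partition_rel_trivial_level[OF Cons.prems True]
      by (intro card_mono) (auto simp: finite_partition_rel)
    also have "\<dots> \<le> 2 ^ l" using Cons.IH[OF Cons.prems] unfolding l_def .
    finally show ?thesis using True unfolding l_def by auto
  next
    case False
    define J where "J = {i \<in> {1..nat \<lceil>log 2 (real n)\<rceil>}. t \<in> part_i V R U i}"
    have "{T \<in> partition_rel V n (U # Us) R. t \<in> T} \<subseteq> (\<Union>i\<in>J. ?containing (part_i V R U i))"
    proof
      fix T assume "T \<in> {T \<in> partition_rel V n (U # Us) R. t \<in> T}"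
      then obtain i where i: "i \<in> {1..nat \<lceil>log 2 (real n)\<rceil>}"
        "T \<in> partition_rel V n Us (part_i V R U i)" and "t \<in> T"
        by auto
      then have "t \<in> part_i V R U i" using partition_rel_memberD(1) by blast
      then show "T \<in> (\<Union>i\<in>J. ?containing (part_i V R U i))"
        using i \<open>t \<in> T\<close> unfolding J_def by blast
    qed
    then have "card {T \<in> partition_rel V n (U # Us) R. t \<in> T}
        \<le> card (\<Union>i\<in>J. ?containing (part_i V R U i))"
      by (intro card_mono) (auto simp: J_def finite_partition_rel)
    also have "\<dots> \<le> (\<Sum>i\<in>J. card (?containing (part_i V R U i)))"
      by (rule card_UN_le) (simp add: J_def)
    also have "\<dots> \<le> card J * 2 ^ l"
    proof -
      have "part_i V R U i \<subseteq> extensional V" for i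
        using Cons.prems unfolding part_i_def by blast
      then have "card (?containing (part_i V R U i)) \<le> 2 ^ l" for i
        using Cons.IH unfolding l_def by blast
      then show ?thesis
        using sum_bounded_above[of J "\<lambda>i. card (?containing (part_i V R U i))" "2 ^ l"] by simp
    qed
    also have "card J \<le> 2"
      by (rule card_dyadic_bands_le_2[of J "deg_val V R U (restrict t U)"])
        (auto simp: J_def part_i_def)
    finally show ?thesis using False unfolding l_def by simp
  qed
qed

lemma length_filter_nontrivial_subsets:
  assumes "finite V" "V \<noteq> {}" "set Ss = Pow V" "distinct Ss"
  shows "length (filter (\<lambda>U. U \<noteq> {} \<and> U \<noteq> V) Ss) = card (Pow V) - 2"
proof -
  let ?nontrivial = "filter (\<lambda>U. U \<noteq> {} \<and> U \<noteq> V) Ss"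
  have "length ?nontrivial = card (set ?nontrivial)"
    using assms(4) by (intro distinct_card[symmetric] distinct_filter)
  also have "set ?nontrivial = Pow V - {{}, V}"
    using assms(3) by auto
  also have "card (Pow V - {{}, V}) = card (Pow V) - 2"
    using assms(1,2) by (subst card_Diff_subset) auto
  finally show ?thesis .
qed

lemma card_partition_rel_le_log_power:
  assumes "finite V" "finite R" "R \<subseteq> extensional V" "card R = n"
    and "set Ss = Pow V" "distinct Ss"
  shows "real (card (partition_rel V n Ss R)) \<le> log 2 (real n) ^ card (Pow V)"
proof (cases "n \<le> 1")
  case True
  obtain U Us where "Ss = U # Us" using assms(5) by (cases Ss) auto
  moreover have "log 2 (real n) = 0" using True by (auto simp: log_def le_Suc_eq)
  ultimately show ?thesis using partition_rel_Cons_le_one[OF True] by simp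
next
  case False
  let ?P = "partition_rel V n Ss R"
  let ?k = "card (Pow V)"
  have "V \<noteq> {}"
    using False assms(4) by (intro vars_nonempty_if_two_le_card[OF assms(3)]) simp
  then have levels: "length (filter (\<lambda>U. U \<noteq> {} \<and> U \<noteq> V) Ss) = ?k - 2"
    using assms(1,5,6) by (intro length_filter_nontrivial_subsets)
  have "?k = 2 \<or> ?k = 4 \<or> 8 \<le> ?k"
    using \<open>V \<noteq> {}\<close> assms(1) two_power_cases[of "card V"] by (simp add: card_Pow Suc_le_eq card_gt_0_iff)
  moreover have "card ?P \<le> nat \<lceil>log 2 (real n)\<rceil> ^ (?k - 2)"
    using card_partition_rel_le[OF assms(3), of n Ss] unfolding levels .
  moreover have "card ?P \<le> card R * 2 ^ (?k - 2)"
  proof (rule card_family_le_card_mult[OF assms(2)])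
    fix t
    show "card {T \<in> ?P. t \<in> T} \<le> 2 ^ (?k - 2)"
      using card_partition_rel_containing_le[OF assms(3), of n Ss t] unfolding levels .
  qed (simp_all add: partition_rel_memberD)
  then have "card ?P \<le> n * 2 ^ (?k - 2)" using assms(4) by simp
  moreover have "card ?P \<le> 2 ^ n"
  proof -
    have "?P \<subseteq> Pow R" using partition_rel_memberD(1) by blast
    then have "card ?P \<le> card (Pow R)" using assms(2) by (intro card_mono) auto
    then show ?thesis using assms(2,4) by (simp add: card_Pow)
  qed
  ultimately show ?thesis
    using False by (intro le_log_power_of_count_bounds) simp_all
qed

section \<open>Constraint sets of the parts\<close>

lemma sorted_wrt_key_less_imp:
  fixes g :: "'a \<Rightarrow> 'b::linorder"
  assumes "sorted_wrt (\<lambda>A B. g A \<le> g B) xs" "sorted_wrt Q xs"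
    "x \<in> set xs" "y \<in> set xs" "g x < g y"
  shows "Q x y"
proof -
  obtain i j where ij: "i < length xs" "xs ! i = x" "j < length xs" "xs ! j = y"
    using assms(3,4) by (auto simp: in_set_conv_nth)
  have "\<not> j \<le> i"
  proof
    assume "j \<le> i"
    then have "g y \<le> g x"
      using assms(1) ij by (cases "j = i") (auto simp: sorted_wrt_iff_nth_less)
    with assms(5) show False by simp
  qed
  then show ?thesis using assms(2) ij by (auto simp: sorted_wrt_iff_nth_less)
qed

definition in_degree_band ::
    "'v set \<Rightarrow> ('v \<Rightarrow> 'a) set \<Rightarrow> 'v set \<Rightarrow> nat \<Rightarrow> ('v \<Rightarrow> 'a) set \<Rightarrow> bool" where
  "in_degree_band V F U l T \<longleftrightarrow>
     (\<forall>t\<in>T. l \<le> deg_val V F U (restrict t U) \<and> deg_val V F U (restrict t U) \<le> 2 * l)"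

lemma part_i_in_degree_band:
  assumes "1 \<le> i"
  shows "in_degree_band V R U (2 ^ (i - 1)) (part_i V R U i)"
proof -
  have "2 * 2 ^ (i - 1) = (2::nat) ^ i"
    using assms by (simp flip: power_Suc)
  then show ?thesis unfolding in_degree_band_def part_i_def by auto
qed

lemma partition_rel_degree_bands:
  assumes "T \<in> partition_rel V n Ss R" "distinct Ss"
  shows "\<exists>F l. (\<forall>U\<in>set Ss. T \<subseteq> F U \<and> F U \<subseteq> R \<and> in_degree_band V (F U) U (l U) T)
    \<and> sorted_wrt (\<lambda>U W. F W \<subseteq> F U) Ss"
  using assms
proof (induction Ss arbitrary: R)
  case Nil
  show ?case by (rule exI[of _ "\<lambda>_. R"]) simp
next
  case (Cons U Us)
  from Cons.prems(1) obtain i where "1 \<le> i" and T_in: "T \<in> partition_rel V n Us (part_i V R U i)"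
    by auto
  have "U \<notin> set Us" "distinct Us" using Cons.prems(2) by auto
  from Cons.IH[OF T_in \<open>distinct Us\<close>] obtain F l where
    bands: "\<forall>W\<in>set Us. T \<subseteq> F W \<and> F W \<subseteq> part_i V R U i \<and> in_degree_band V (F W) W (l W) T"
    and sorted: "sorted_wrt (\<lambda>U W. F W \<subseteq> F U) Us"
    by blast
  have T_sub: "T \<subseteq> part_i V R U i" using partition_rel_memberD(1)[OF T_in] .
  have part_sub: "part_i V R U i \<subseteq> R" unfolding part_i_def by blast
  define F' where "F' = F(U := R)"
  define l' where "l' = l(U := 2 ^ (i - 1))"
  have "T \<subseteq> F' W \<and> F' W \<subseteq> R \<and> in_degree_band V (F' W) W (l' W) T" if "W \<in> set (U # Us)" for W
  proof (cases "W = U")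
    case True
    then show ?thesis
      using T_sub part_sub part_i_in_degree_band[OF \<open>1 \<le> i\<close>, of V R U]
      unfolding F'_def l'_def in_degree_band_def by auto
  next
    case False
    then have "W \<in> set Us" using that by simp
    then show ?thesis using bands part_sub False unfolding F'_def l'_def by auto
  qed
  moreover have "sorted_wrt (\<lambda>W W'. F' W' \<subseteq> F' W) (U # Us)"
  proof -
    have F'_Us: "F' W = F W" "F' W \<subseteq> F' U" if "W \<in> set Us" for W
      using that bands part_sub \<open>U \<notin> set Us\<close> unfolding F'_def by auto
    have "sorted_wrt (\<lambda>W W'. F' W' \<subseteq> F' W) Us"
      using sorted by (rule sorted_wrt_mono_rel[rotated]) (simp add: F'_Us(1))
    then show ?thesis using F'_Us(2) by simp
  qed
  ultimately show ?case by blast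
qed

lemma satisfies_if_nested_degree_bands:
  assumes "finite R" "R \<subseteq> extensional V" "card R = n"
    and bands: "\<And>U. U \<subseteq> V \<Longrightarrow> T \<subseteq> F U \<and> F U \<subseteq> R \<and> in_degree_band V (F U) U (l U) T"
    and nested: "\<And>X Y. X \<subset> Y \<Longrightarrow> Y \<subseteq> V \<Longrightarrow> F Y \<subseteq> F X"
  shows "satisfies T V (\<lambda>X. if X = {} then real n else real (l X))"
  unfolding satisfies_def
proof (intro allI impI)
  fix X Y assume XY: "X \<subseteq> Y \<and> Y \<subseteq> V"
  let ?\<sigma> = "\<lambda>X. if X = {} then real n else real (l X)"
  have F: "F U \<subseteq> extensional V" "finite (F U)" if "U \<subseteq> V" for U
    using bands[OF that] assms(1,2) finite_subset by blast+
  have "finite T" using bands[of V] F(2)[of V] finite_subset by blast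
  from deg_attained[OF this, of Y X]
  consider "deg T Y X = 0" | t where "t \<in> T" "deg T Y X = deg_at T Y X (restrict t X)"
    by auto
  then show "real (deg T Y X) * ?\<sigma> Y \<le> 2 * ?\<sigma> X"
  proof cases
    case (2 t)
    show ?thesis
    proof (cases "X = Y")
      case True
      then show ?thesis using 2 deg_at_self[of t T Y] by simp
    next
      case False
      then have "Y \<noteq> {}" using XY by auto
      let ?above = "\<lambda>G. {u \<in> G. restrict u X = restrict t X}"
      have "deg T Y X * l Y \<le> card (?above (F Y))"
        using 2 deg_at_mult_le_card[OF _ F[of Y]] bands[of Y] XY
        unfolding in_degree_band_def by auto
      show ?thesis
      proof (cases "X = {}")
        case True
        have "card (?above (F Y)) \<le> card R"
          using bands[of Y] XY assms(1) by (intro card_mono) auto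
        then have "deg T Y X * l Y \<le> n"
          using \<open>deg T Y X * l Y \<le> _\<close> assms(3) by linarith
        then have "real (deg T Y X) * real (l Y) \<le> real n"
          by (metis of_nat_le_iff of_nat_mult)
        then show ?thesis using True \<open>Y \<noteq> {}\<close> by simp
      next
        case False
        have "card (?above (F Y)) \<le> card (?above (F X))"
          using nested[of X Y] \<open>X \<noteq> Y\<close> XY F(2)[of X] by (intro card_mono) auto
        also have "\<dots> = deg_val V (F X) X (restrict t X)"
          using XY by (intro deg_val_eq_card[symmetric] F(1)) blast
        also have "\<dots> \<le> 2 * l X"
          using bands[of X] XY 2(1) unfolding in_degree_band_def by auto
        finally have "deg T Y X * l Y \<le> 2 * l X"
          using \<open>deg T Y X * l Y \<le> _\<close> by linarith
        then have "real (deg T Y X) * real (l Y) \<le> 2 * real (l X)"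
          by (metis of_nat_le_iff of_nat_mult of_nat_numeral)
        then show ?thesis using False \<open>Y \<noteq> {}\<close> by simp
      qed
    qed
  qed simp
qed

lemma partition_rel_satisfies_constraint_set:
  assumes "finite V" "finite R" "R \<subseteq> extensional V" "card R = n"
    and "set Ss = Pow V" "distinct Ss" "sorted_wrt (\<lambda>A B. card A \<le> card B) Ss"
    and "T \<in> partition_rel V n Ss R"
  shows "\<exists>\<sigma>. constraint_set V \<sigma> \<and> satisfies T V \<sigma> \<and> \<sigma> {} = real n \<and> \<sigma> V = 1"
proof -
  obtain F l where
    bands: "\<forall>U\<in>set Ss. T \<subseteq> F U \<and> F U \<subseteq> R \<and> in_degree_band V (F U) U (l U) T"
    and sorted: "sorted_wrt (\<lambda>U W. F W \<subseteq> F U) Ss"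
    using partition_rel_degree_bands[OF assms(8,6)] by blast
  have nested: "F Y \<subseteq> F X" if "X \<subset> Y" "Y \<subseteq> V" for X Y
  proof (rule sorted_wrt_key_less_imp[OF assms(7) sorted])
    show "X \<in> set Ss" "Y \<in> set Ss" using that assms(5) by auto
    have "finite Y" using that(2) assms(1) by (rule finite_subset)
    then show "card X < card Y" using that(1) by (rule psubset_card_mono)
  qed
  have "V \<noteq> {}"
  proof -
    obtain U Us where "Ss = U # Us" using assms(5) by (cases Ss) auto
    then have "\<not> n \<le> 1" using partition_rel_Cons_le_one[of n V U Us R] assms(8) by auto
    then show ?thesis
      using assms(4) by (intro vars_nonempty_if_two_le_card[OF assms(3)]) simp
  qed
  define \<sigma> where "\<sigma> X = (if X = {} then real n else real (l X))" for X
  have "\<sigma> V = 1"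
  proof -
    obtain t where "t \<in> T" using partition_rel_memberD(2)[OF assms(8)] by blast
    have "T \<subseteq> F V" "F V \<subseteq> R" "in_degree_band V (F V) V (l V) T"
      using bands assms(5) by auto
    then have "l V \<le> deg_val V (F V) V (restrict t V)" "deg_val V (F V) V (restrict t V) \<le> 2 * l V"
      using \<open>t \<in> T\<close> unfolding in_degree_band_def by auto
    moreover have "deg_val V (F V) V (restrict t V) = 1"
      using \<open>t \<in> T\<close> \<open>T \<subseteq> F V\<close> \<open>F V \<subseteq> R\<close> assms(3) by (intro deg_val_all_vars) auto
    ultimately have "l V = 1" by linarith
    then show ?thesis using \<open>V \<noteq> {}\<close> by (simp add: \<sigma>_def)
  qed
  moreover have "satisfies T V \<sigma>"
    unfolding \<sigma>_def using bands assms(5) nested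
    by (intro satisfies_if_nested_degree_bands[OF assms(2-4), where F = F]) auto
  moreover have "constraint_set V \<sigma>" "\<sigma> {} = real n"
    unfolding constraint_set_def \<sigma>_def by simp_all
  ultimately show ?thesis by (intro exI[of _ \<sigma>]) simp
qed

theorem lemma4p3:
  fixes V :: "'v set" and R :: "('v \<Rightarrow> 'a) set" and n :: nat and Ss :: "'v set list"
  assumes "finite V" and "finite R" and "R \<subseteq> extensional V" and "card R = n"
    and "set Ss = Pow V" and "distinct Ss"
    and "sorted_wrt (\<lambda>A B. card A \<le> card B) Ss"
  shows "real (card (partition_rel V n Ss R)) \<le> (log 2 (real n)) ^ card (Pow V) \<and>
         (\<forall>T \<in> partition_rel V n Ss R. \<exists>\<sigma>. constraint_set V \<sigma> \<and> satisfies T V \<sigma> \<and>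
              \<sigma> {} = real n \<and> \<sigma> V = 1)"
  using card_partition_rel_le_log_power[OF assms(1-6)]
    partition_rel_satisfies_constraint_set[OF assms]
  by simp

end
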